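(* For every positive integer $n$ and every function $\sigma\colon E(K_{4n})\to\{-1,1\}$ with $\sigma\left(E(K_{4n})\right)=0$, there is a perfect matching $M$ in $K_{4n}$ with $\sigma(M)=0$.
   Context: $K_{4n}$ denotes the complete graph on $4n$ vertices and $E(K_{4n})$ its edge set. For a set $F$ of edges, $\sigma(F)=\sum_{e\in F}\sigma(e)$. *)

theory Defs
  imports Main
begin

definition complete_edges :: "'a set \<Rightarrow> 'a set set" where
  "complete_edges V = {e. e \<subseteq> V \<and> card e = 2}"

definition perfect_matching_complete :: "'a set \<Rightarrow> 'a set set \<Rightarrow> bool" where
  "perfect_matching_complete V M \<longleftrightarrow>
     M \<subseteq> complete_edges V \<and> (\<forall>v\<in>V. \<exists>!e. e \<in> M \<and> v \<in> e)"

end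

theory Submission
  imports Defs
begin

text \<open>
  Suppose no perfect matching of \<open>K\<^sub>4\<^sub>n\<close> has sum 0. For a perfect matching \<open>M\<close> of minimal
  sum, neither way of switching two of its edges lowers the sum; adding up these inequalities
  over all pairs of edges of \<open>M\<close> gives \<open>(2 |M| - 1) \<sigma>(M) \<le> \<sigma>(K\<^sub>4\<^sub>n) = 0\<close>. So some perfect
  matching is negative and, applied to \<open>-\<sigma>\<close>, some is positive. Any two perfect matchings are
  connected by switches, hence some switch turns a negative matching \<open>N\<close> into a positive one.
  Sums of perfect matchings are even, so \<open>\<sigma>(N) = -2\<close> and the switch replaces two edges of
  sign \<open>-1\<close> by two of sign \<open>1\<close>. Now \<open>\<sigma>(K\<^sub>4\<^sub>n)\<close> is \<open>\<sigma>(N)\<close> plus, for every pair of edges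
  of \<open>N\<close>, the sum over the four edges joining them; since no switch of \<open>N\<close>, of the switched
  matching or of the third matching on the four switched vertices has sum 0, these
  contributions add up to a multiple of 4. Hence \<open>\<sigma>(K\<^sub>4\<^sub>n) \<equiv> 2 (mod 4)\<close>, a contradiction.
\<close>

lemma complete_edges_finite: "finite V \<Longrightarrow> finite (complete_edges V)"
  by (rule finite_subset[of _ "Pow V"]) (auto simp: complete_edges_def)

lemma doubleton_in_complete_edges: "x \<in> V \<Longrightarrow> y \<in> V \<Longrightarrow> x \<noteq> y \<Longrightarrow> {x, y} \<in> complete_edges V"
  by (simp add: complete_edges_def)

lemma card_2_subset_eq: "card x = 2 \<Longrightarrow> card e = 2 \<Longrightarrow> x \<subseteq> e \<Longrightarrow> x = e"
  by (metis card_subset_eq card.infinite zero_neq_numeral)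

lemma perfect_matching_complete_iff:
  "perfect_matching_complete V M \<longleftrightarrow>
     M \<subseteq> complete_edges V \<and> \<Union>M = V \<and> pairwise disjnt M"
proof
  assume "perfect_matching_complete V M"
  then have sub: "M \<subseteq> complete_edges V" and unique: "\<forall>v\<in>V. \<exists>!e. e \<in> M \<and> v \<in> e"
    by (auto simp: perfect_matching_complete_def)
  have "\<Union>M \<subseteq> V" using sub by (auto simp: complete_edges_def)
  then have "\<Union>M = V" using unique by blast
  moreover have "pairwise disjnt M"
    unfolding pairwise_def disjnt_def using unique \<open>\<Union>M \<subseteq> V\<close> by blast
  ultimately show "M \<subseteq> complete_edges V \<and> \<Union>M = V \<and> pairwise disjnt M"
    using sub by blast
next
  assume "M \<subseteq> complete_edges V \<and> \<Union>M = V \<and> pairwise disjnt M"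
  then show "perfect_matching_complete V M"
    unfolding perfect_matching_complete_def pairwise_def disjnt_def by blast
qed

lemma perfect_matching_edgeE:
  assumes "perfect_matching_complete V M" "e \<in> M"
  obtains x y where "e = {x, y}" "x \<noteq> y" "x \<in> V" "y \<in> V"
  using assms unfolding perfect_matching_complete_iff complete_edges_def
  by (auto simp: card_2_iff)

lemma perfect_matching_edge_unique:
  "perfect_matching_complete V M \<Longrightarrow> e \<in> M \<Longrightarrow> f \<in> M \<Longrightarrow> v \<in> e \<Longrightarrow> v \<in> f \<Longrightarrow> e = f"
  unfolding perfect_matching_complete_iff pairwise_def disjnt_def by blast

lemma perfect_matching_covers:
  "perfect_matching_complete V M \<Longrightarrow> v \<in> V \<Longrightarrow> \<exists>e\<in>M. v \<in> e"
  unfolding perfect_matching_complete_iff by blast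

lemma perfect_matching_partner:
  assumes "perfect_matching_complete V M" "v \<in> V"
  obtains w where "{v, w} \<in> M" "w \<noteq> v"
proof -
  obtain e where "e \<in> M" "v \<in> e" using perfect_matching_covers[OF assms] by blast
  moreover obtain x y where "e = {x, y}" "x \<noteq> y"
    using perfect_matching_edgeE[OF assms(1) \<open>e \<in> M\<close>] by metis
  ultimately show ?thesis using that by (auto simp: insert_commute)
qed

lemma perfect_matching_finite:
  "finite V \<Longrightarrow> perfect_matching_complete V M \<Longrightarrow> finite M"
  using complete_edges_finite finite_subset unfolding perfect_matching_complete_iff by blast

lemma finite_perfect_matchings: "finite V \<Longrightarrow> finite {M. perfect_matching_complete V M}"
  by (rule finite_subset[of _ "Pow (complete_edges V)"])
     (auto simp: perfect_matching_complete_iff complete_edges_finite)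

lemma card_perfect_matching:
  assumes "finite V" "perfect_matching_complete V M"
  shows "card V = 2 * card M"
proof -
  have M: "M \<subseteq> complete_edges V" "\<Union>M = V" "pairwise disjnt M"
    using assms(2) by (auto simp: perfect_matching_complete_iff)
  have "card (\<Union>M) = sum card M"
    using M assms(1) by (intro card_Union_disjoint) (auto intro: finite_subset)
  also have "\<dots> = sum (\<lambda>_. 2) M"
    using M(1) by (intro sum.cong) (auto simp: complete_edges_def)
  finally show ?thesis using M(2) by simp
qed

lemma perfect_matching_subset_eq:
  assumes "perfect_matching_complete V M" "perfect_matching_complete V M'" "M \<subseteq> M'"
  shows "M = M'"
proof
  show "M' \<subseteq> M"
  proof
    fix f assume "f \<in> M'"
    then obtain x y where "f = {x, y}" "x \<in> V"
      using assms(2) by (auto elim: perfect_matching_edgeE)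
    then obtain e where "e \<in> M" "x \<in> e" using perfect_matching_covers[OF assms(1)] by blast
    then have "e = f"
      using perfect_matching_edge_unique[OF assms(2), of e f x] assms(3) \<open>f \<in> M'\<close> \<open>f = {x, y}\<close>
      by blast
    with \<open>e \<in> M\<close> show "f \<in> M" by simp
  qed
qed (rule assms(3))

lemma perfect_matching_pairs:
  "perfect_matching_complete {0..<2 * (m::nat)} ((\<lambda>i. {2 * i, 2 * i + 1}) ` {0..<m})"
  unfolding perfect_matching_complete_iff
proof (intro conjI)
  show "(\<lambda>i. {2 * i, 2 * i + 1}) ` {0..<m} \<subseteq> complete_edges {0..<2 * m}"
    by (auto simp: complete_edges_def)
  show "\<Union>((\<lambda>i. {2 * i, 2 * i + 1}) ` {0..<m}) = {0..<2 * m}"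
  proof (rule set_eqI)
    fix v :: nat
    have "v \<in> {2 * (v div 2), 2 * (v div 2) + 1}" by auto
    then show "v \<in> \<Union>((\<lambda>i. {2 * i, 2 * i + 1}) ` {0..<m}) \<longleftrightarrow> v \<in> {0..<2 * m}"
      by auto
  qed
  show "pairwise disjnt ((\<lambda>i. {2 * i, 2 * i + 1}) ` {0..<m})"
    unfolding pairwise_def disjnt_def by auto presburger+
qed

definition switch :: "'a set set \<Rightarrow> 'a \<Rightarrow> 'a \<Rightarrow> 'a \<Rightarrow> 'a \<Rightarrow> 'a set set" where
  "switch M a b c d = M - {{a, b}, {c, d}} \<union> {{a, c}, {b, d}}"

lemma perfect_matching_switch:
  assumes M: "perfect_matching_complete V M" and "{a, b} \<in> M" "{c, d} \<in> M"
    and "distinct [a, b, c, d]"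
  shows "perfect_matching_complete V (switch M a b c d)"
proof -
  have abcd: "{a, b, c, d} \<subseteq> V"
    using assms(2,3) M by (auto simp: perfect_matching_complete_iff complete_edges_def)
  have avoid: "e \<inter> {a, b, c, d} = {}" if "e \<in> M - {{a, b}, {c, d}}" for e
    using that assms(2,3) perfect_matching_edge_unique[OF M] by blast
  show ?thesis
    using M abcd avoid assms(4)
    unfolding switch_def perfect_matching_complete_iff pairwise_def disjnt_def complete_edges_def
    by (auto; blast)
qed

lemma switched_edges_notin:
  assumes "perfect_matching_complete V M" "{a, b} \<in> M" "distinct [a, b, c, d]"
  shows "{a, c} \<notin> M" "{b, d} \<notin> M"
proof -
  have "{a, c} \<noteq> {a, b}" "{b, d} \<noteq> {a, b}"
    using assms(3) by (auto simp: doubleton_eq_iff)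
  then show "{a, c} \<notin> M" "{b, d} \<notin> M"
    using perfect_matching_edge_unique[OF assms(1) _ assms(2)] by blast+
qed

lemma switch_switch:
  assumes "perfect_matching_complete V M" "{a, b} \<in> M" "{c, d} \<in> M" "distinct [a, b, c, d]"
  shows "switch (switch M a b c d) a c b d = M"
  using switched_edges_notin[OF assms(1,2,4)] assms(2-4)
  unfolding switch_def by (auto simp: doubleton_eq_iff)

lemma sum_switch:
  fixes s :: "'a set \<Rightarrow> 'b::ab_group_add"
  assumes "finite V" "perfect_matching_complete V M" "{a, b} \<in> M" "{c, d} \<in> M"
    and "distinct [a, b, c, d]"
  shows "sum s (switch M a b c d) = sum s M - s {a, b} - s {c, d} + s {a, c} + s {b, d}"
proof -
  note new = switched_edges_notin[OF assms(2,3,5)]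
  have fin: "finite M" using perfect_matching_finite[OF assms(1,2)] .
  have "sum s (switch M a b c d) = sum s (M - {{a, b}, {c, d}}) + sum s {{a, c}, {b, d}}"
    unfolding switch_def using fin new by (intro sum.union_disjoint) auto
  also have "sum s (M - {{a, b}, {c, d}}) = sum s M - sum s {{a, b}, {c, d}}"
    using fin assms(3,4) by (intro sum_diff) auto
  finally show ?thesis
    using assms(5) by (simp add: doubleton_eq_iff algebra_simps)
qed

definition cross_edges :: "'a set set \<Rightarrow> 'a set set" where
  "cross_edges P = complete_edges (\<Union>P) - P"

lemma cross_edges_doubleton:
  assumes "distinct [a, b, c, d]"
  shows "cross_edges {{a, b}, {c, d}} = {{a, c}, {a, d}, {b, c}, {b, d}}"
proof (intro equalityI subsetI)
  fix x assume "x \<in> cross_edges {{a, b}, {c, d}}"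
  then obtain u v where "x = {u, v}" "u \<noteq> v" "u \<in> {a, b, c, d}" "v \<in> {a, b, c, d}"
    "x \<noteq> {a, b}" "x \<noteq> {c, d}"
    by (auto simp: cross_edges_def complete_edges_def card_2_iff)
  then show "x \<in> {{a, c}, {a, d}, {b, c}, {b, d}}" by (auto simp: doubleton_eq_iff)
next
  fix x assume "x \<in> {{a, c}, {a, d}, {b, c}, {b, d}}"
  then show "x \<in> cross_edges {{a, b}, {c, d}}"
    using assms by (auto simp: cross_edges_def complete_edges_def doubleton_eq_iff)
qed

lemma sum_cross_edges_doubleton:
  "distinct [a, b, c, d] \<Longrightarrow>
     sum s (cross_edges {{a, b}, {c, d}}) = s {a, c} + s {a, d} + s {b, c} + s {b, d}"
  by (simp add: cross_edges_doubleton doubleton_eq_iff add.assoc)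

lemma complete_edges_Union:
  assumes "\<forall>e\<in>A. card e = 2" "pairwise disjnt A"
  shows "complete_edges (\<Union>A) = A \<union> (\<Union>P\<in>complete_edges A. cross_edges P)"
proof (intro equalityI subsetI)
  fix x assume "x \<in> complete_edges (\<Union>A)"
  then obtain u v where x: "x = {u, v}" "u \<noteq> v" "u \<in> \<Union>A" "v \<in> \<Union>A"
    by (auto simp: complete_edges_def card_2_iff)
  then obtain e f where ef: "e \<in> A" "f \<in> A" "u \<in> e" "v \<in> f" by blast
  show "x \<in> A \<union> (\<Union>P\<in>complete_edges A. cross_edges P)"
  proof (cases "x \<in> A")
    case False
    have "e \<noteq> f"
    proof
      assume "e = f"
      then have "x = e" using card_2_subset_eq[of x e] x ef assms(1) by auto
      with \<open>x \<notin> A\<close> \<open>e \<in> A\<close> show False by simp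
    qed
    then have "{e, f} \<in> complete_edges A" using ef by (simp add: complete_edges_def)
    moreover have "x \<in> cross_edges {e, f}"
      using False x ef by (auto simp: cross_edges_def complete_edges_def)
    ultimately show ?thesis by blast
  qed simp
next
  fix x assume "x \<in> A \<union> (\<Union>P\<in>complete_edges A. cross_edges P)"
  then show "x \<in> complete_edges (\<Union>A)"
    using assms(1) unfolding cross_edges_def complete_edges_def by blast
qed

lemma cross_edges_determine_pair:
  assumes "\<forall>e\<in>A. card e = 2" "pairwise disjnt A"
    and "P \<in> complete_edges A" "x \<in> cross_edges P"
  shows "P = {e \<in> A. \<not> disjnt e x}"
proof -
  obtain e f where P: "P = {e, f}" "e \<noteq> f" "e \<in> A" "f \<in> A"
    using assms(3) by (auto simp: complete_edges_def card_2_iff)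
  have x: "card x = 2" "x \<subseteq> e \<union> f" "x \<noteq> e" "x \<noteq> f"
    using assms(4) P by (auto simp: cross_edges_def complete_edges_def)
  have "\<not> x \<subseteq> e" "\<not> x \<subseteq> f"
    using card_2_subset_eq x assms(1) P by metis+
  then have "\<not> disjnt e x" "\<not> disjnt f x"
    using x(2) by (auto simp: disjnt_def)
  moreover have "g = e \<or> g = f" if "g \<in> A" "\<not> disjnt g x" for g
    using that x(2) assms(2) P unfolding pairwise_def disjnt_def by blast
  ultimately show ?thesis using P by blast
qed

lemma cross_edges_disjoint_edges:
  assumes "\<forall>e\<in>A. card e = 2" "pairwise disjnt A" "P \<in> complete_edges A"
  shows "A \<inter> cross_edges P = {}"
proof (rule ccontr)
  assume "A \<inter> cross_edges P \<noteq> {}"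
  then obtain x where x: "x \<in> A" "x \<in> cross_edges P" by blast
  have "x \<noteq> {}" using x(1) assms(1) by (metis card.empty zero_neq_numeral)
  then have "{e \<in> A. \<not> disjnt e x} = {x}"
    using x(1) pairwiseD[OF assms(2)] by auto
  then have "P = {x}" using cross_edges_determine_pair[OF assms x(2)] by simp
  then show False using assms(3) by (simp add: complete_edges_def)
qed

lemma cross_edges_disjoint:
  assumes "\<forall>e\<in>A. card e = 2" "pairwise disjnt A"
    and "P \<in> complete_edges A" "Q \<in> complete_edges A" "P \<noteq> Q"
  shows "cross_edges P \<inter> cross_edges Q = {}"
  using cross_edges_determine_pair[OF assms(1-3)] cross_edges_determine_pair[OF assms(1,2,4)] assms(5)
  by blast

lemma sum_complete_edges_perfect_matching:
  fixes s :: "'a set \<Rightarrow> 'b::comm_monoid_add"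
  assumes "finite V" "perfect_matching_complete V M"
  shows "sum s (complete_edges V) = sum s M + (\<Sum>P\<in>complete_edges M. sum s (cross_edges P))"
proof -
  have M: "\<forall>e\<in>M. card e = 2" "pairwise disjnt M" "\<Union>M = V"
    using assms(2) by (auto simp: perfect_matching_complete_iff complete_edges_def)
  have fin: "finite M" using perfect_matching_finite[OF assms] .
  have fin_cross: "finite (cross_edges P)" if "P \<in> complete_edges M" for P
  proof -
    have "\<Union>P \<subseteq> V" using that M(3) by (auto simp: complete_edges_def)
    then show ?thesis
      using assms(1) complete_edges_finite finite_subset unfolding cross_edges_def by blast
  qed
  have "sum s (complete_edges V) = sum s M + sum s (\<Union>P\<in>complete_edges M. cross_edges P)"
    unfolding M(3)[symmetric] complete_edges_Union[OF M(1,2)]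
    using fin fin_cross cross_edges_disjoint_edges[OF M(1,2)]
    by (intro sum.union_disjoint) (simp_all add: complete_edges_finite, blast)
  also have "sum s (\<Union>P\<in>complete_edges M. cross_edges P) = (\<Sum>P\<in>complete_edges M. sum s (cross_edges P))"
    using fin fin_cross cross_edges_disjoint[OF M(1,2)] by (intro sum.UNION_disjoint) (simp_all add: complete_edges_finite)
  finally show ?thesis .
qed

lemma complete_edges_insert:
  assumes "x \<notin> A"
  shows "complete_edges (insert x A) = complete_edges A \<union> (\<lambda>y. {x, y}) ` A"
proof (intro equalityI subsetI)
  fix e assume "e \<in> complete_edges (insert x A)"
  then obtain u v where e: "e = {u, v}" "u \<noteq> v" "u \<in> insert x A" "v \<in> insert x A"
    by (auto simp: complete_edges_def card_2_iff)
  show "e \<in> complete_edges A \<union> (\<lambda>y. {x, y}) ` A"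
  proof (cases "u = x \<or> v = x")
    case True
    with e show ?thesis by (auto simp: insert_commute)
  next
    case False
    with e show ?thesis by (simp add: complete_edges_def)
  qed
next
  fix e assume "e \<in> complete_edges A \<union> (\<lambda>y. {x, y}) ` A"
  then show "e \<in> complete_edges (insert x A)"
    using assms by (auto simp: complete_edges_def card_insert_if)
qed

lemma sum_complete_edges_insert:
  assumes "finite A" "x \<notin> A"
  shows "sum g (complete_edges (insert x A)) = sum g (complete_edges A) + (\<Sum>y\<in>A. g {x, y})"
proof -
  have "sum g (complete_edges (insert x A)) = sum g (complete_edges A) + sum g ((\<lambda>y. {x, y}) ` A)"
    unfolding complete_edges_insert[OF assms(2)] using assms complete_edges_finite[OF assms(1)]
    by (intro sum.union_disjoint) (auto simp: complete_edges_def)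
  also have "sum g ((\<lambda>y. {x, y}) ` A) = (\<Sum>y\<in>A. g {x, y})"
    by (rule sum.reindex_cong[where l = "\<lambda>y. {x, y}"]) (auto simp: inj_on_def doubleton_eq_iff)
  finally show ?thesis .
qed

lemma sum_complete_edges_insert2:
  assumes "finite R" "e \<notin> insert f R" "f \<notin> R"
  shows "(\<Sum>P\<in>complete_edges (insert e (insert f R)). g P) =
           (\<Sum>P\<in>complete_edges R. g P) + g {e, f} + (\<Sum>h\<in>R. g {e, h} + g {f, h})"
  using assms
  by (simp add: sum_complete_edges_insert sum.distrib insert_commute[of f e] algebra_simps)

lemma sum_sum_complete_edges:
  fixes t :: "'a \<Rightarrow> 'b::comm_ring_1"
  assumes "finite M"
  shows "(\<Sum>P\<in>complete_edges M. \<Sum>e\<in>P. t e) = (of_nat (card M) - 1) * sum t M"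
  using assms
proof (induction M rule: finite_induct)
  case empty
  then show ?case by (simp add: complete_edges_def)
next
  case (insert x A)
  have "x \<noteq> y" if "y \<in> A" for y using that insert.hyps(2) by blast
  then have "(\<Sum>P\<in>complete_edges (insert x A). \<Sum>e\<in>P. t e)
      = (\<Sum>P\<in>complete_edges A. \<Sum>e\<in>P. t e) + (\<Sum>y\<in>A. t x + t y)"
    using insert.hyps by (simp add: sum_complete_edges_insert)
  then show ?case
    using insert by (simp add: sum.distrib algebra_simps)
qed

lemma cross_sum_ge_of_minimal:
  fixes s :: "'a set \<Rightarrow> 'b::linordered_idom"
  assumes "finite V" "perfect_matching_complete V M"
    and min: "\<And>M'. perfect_matching_complete V M' \<Longrightarrow> sum s M \<le> sum s M'"
    and "P \<in> complete_edges M"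
  shows "2 * sum s P \<le> sum s (cross_edges P)"
proof -
  obtain e f where P: "P = {e, f}" "e \<noteq> f" "e \<in> M" "f \<in> M"
    using assms(4) by (auto simp: complete_edges_def card_2_iff)
  obtain a b where ab: "e = {a, b}" "a \<noteq> b"
    using perfect_matching_edgeE[OF assms(2) P(3)] by metis
  obtain c d where cd: "f = {c, d}" "c \<noteq> d"
    using perfect_matching_edgeE[OF assms(2) P(4)] by metis
  have "disjnt e f" using assms(2) P by (auto simp: perfect_matching_complete_iff pairwise_def)
  then have abcd: "distinct [a, b, c, d]" "distinct [a, b, d, c]"
    using ab cd by (auto simp: disjnt_def)
  have in_M: "{a, b} \<in> M" "{c, d} \<in> M" "{d, c} \<in> M"
    using P ab cd by (auto simp: insert_commute)
  have "sum s M \<le> sum s (switch M a b c d)"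
    using perfect_matching_switch[OF assms(2) in_M(1,2) abcd(1)] by (rule min)
  then have 1: "s {a, b} + s {c, d} \<le> s {a, c} + s {b, d}"
    unfolding sum_switch[OF assms(1,2) in_M(1,2) abcd(1)] by (simp add: algebra_simps)
  have "sum s M \<le> sum s (switch M a b d c)"
    using perfect_matching_switch[OF assms(2) in_M(1,3) abcd(2)] by (rule min)
  then have 2: "s {a, b} + s {c, d} \<le> s {a, d} + s {b, c}"
    unfolding sum_switch[OF assms(1,2) in_M(1,3) abcd(2)] insert_commute[of d c]
    by (simp add: algebra_simps)
  have "sum s P = s {a, b} + s {c, d}"
    using P ab cd by simp
  then have "2 * sum s P = (s {a, b} + s {c, d}) + (s {a, b} + s {c, d})"
    by (simp only: mult_2)
  also have "\<dots> \<le> (s {a, c} + s {b, d}) + (s {a, d} + s {b, c})"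
    using 1 2 by (rule add_mono)
  also have "\<dots> = sum s (cross_edges P)"
    using sum_cross_edges_doubleton[OF abcd(1), of s] P ab cd by (simp add: ac_simps)
  finally show ?thesis .
qed

lemma exists_perfect_matching_sum_nonpos:
  fixes s :: "'a set \<Rightarrow> 'b::linordered_idom"
  assumes "finite V" "perfect_matching_complete V M\<^sub>0" "sum s (complete_edges V) \<le> 0"
  shows "\<exists>M. perfect_matching_complete V M \<and> sum s M \<le> 0"
proof -
  obtain M where M: "perfect_matching_complete V M"
    and min: "\<And>M'. perfect_matching_complete V M' \<Longrightarrow> sum s M \<le> sum s M'"
    using ex_is_arg_min_if_finite[OF finite_perfect_matchings[OF assms(1)], of "sum s"] assms(2)
    unfolding is_arg_min_def by (auto simp: not_less)
  have fin: "finite M" using perfect_matching_finite[OF assms(1) M] .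
  have "(\<Sum>P\<in>complete_edges M. 2 * sum s P) = 2 * ((of_nat (card M) - 1) * sum s M)"
    by (simp only: sum_distrib_left[symmetric] sum_sum_complete_edges[OF fin])
  then have "(2 * of_nat (card M) - 1) * sum s M = sum s M + (\<Sum>P\<in>complete_edges M. 2 * sum s P)"
    by (simp add: algebra_simps)
  also have "\<dots> \<le> sum s M + (\<Sum>P\<in>complete_edges M. sum s (cross_edges P))"
    using cross_sum_ge_of_minimal[OF assms(1) M min] by (intro add_left_mono sum_mono)
  also have "\<dots> = sum s (complete_edges V)"
    by (rule sum_complete_edges_perfect_matching[OF assms(1) M, symmetric])
  finally have bound: "(2 * of_nat (card M) - 1) * sum s M \<le> 0"
    using assms(3) by order
  show ?thesis
  proof (cases "M = {}")
    case False
    then have "(1::'b) \<le> of_nat (card M)" using fin by (simp add: Suc_le_eq card_gt_0_iff)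
    then have "0 < 2 * of_nat (card M) - (1::'b)" by linarith
    then have "sum s M \<le> 0" using bound by (simp add: mult_le_0_iff)
    with M show ?thesis by blast
  qed (use M in auto)
qed

lemma switch_reduces_difference:
  assumes "finite V" "perfect_matching_complete V M\<^sub>1" "perfect_matching_complete V M\<^sub>2"
    and "M\<^sub>1 \<noteq> M\<^sub>2"
  obtains a b c d where "{a, b} \<in> M\<^sub>2" "{c, d} \<in> M\<^sub>2" "distinct [a, b, c, d]"
    "card (switch M\<^sub>2 a b c d - M\<^sub>1) < card (M\<^sub>2 - M\<^sub>1)"
proof -
  note M1 = assms(2) and M2 = assms(3)
  have "\<not> M\<^sub>1 \<subseteq> M\<^sub>2"
    using perfect_matching_subset_eq[OF M1 M2] assms(4) by blast
  then obtain e where e: "e \<in> M\<^sub>1" "e \<notin> M\<^sub>2" by blast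
  then obtain a b where ab: "e = {a, b}" "a \<noteq> b" "a \<in> V" "b \<in> V"
    using perfect_matching_edgeE[OF M1] by metis
  obtain a' where a': "{a, a'} \<in> M\<^sub>2" "a' \<noteq> a"
    using perfect_matching_partner[OF M2 ab(3)] by metis
  obtain b' where b': "{b, b'} \<in> M\<^sub>2" "b' \<noteq> b"
    using perfect_matching_partner[OF M2 ab(4)] by metis
  have "a' \<noteq> b" "b' \<noteq> a" using e ab a' b' by (auto simp: insert_commute)
  moreover have "a' \<noteq> b'"
    using perfect_matching_edge_unique[OF M2 a'(1) b'(1), of a'] ab(2) by (auto simp: doubleton_eq_iff)
  ultimately have dist: "distinct [a, a', b, b']" using ab(2) a'(2) b'(2) by auto
  have "{a, a'} \<noteq> e" "{b, b'} \<noteq> e" using ab dist by (auto simp: doubleton_eq_iff)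
  then have "{a, a'} \<notin> M\<^sub>1" "{b, b'} \<notin> M\<^sub>1"
    using perfect_matching_edge_unique[OF M1 _ e(1)] ab(1) by blast+
  then have gone: "{{a, a'}, {b, b'}} \<subseteq> M\<^sub>2 - M\<^sub>1" "card {{a, a'}, {b, b'}} = 2"
    using a' b' dist by (auto simp: doubleton_eq_iff)
  have fin: "finite M\<^sub>2" using perfect_matching_finite[OF assms(1) M2] .
  let ?rest = "(M\<^sub>2 - M\<^sub>1) - {{a, a'}, {b, b'}}"
  have "switch M\<^sub>2 a a' b b' - M\<^sub>1 \<subseteq> insert {a', b'} ?rest"
    unfolding switch_def using e ab by auto
  then have "card (switch M\<^sub>2 a a' b b' - M\<^sub>1) \<le> card (insert {a', b'} ?rest)"
    using fin by (intro card_mono) auto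
  also have "\<dots> \<le> Suc (card ?rest)"
    using fin by (simp add: card_insert_if)
  also have "\<dots> < card (M\<^sub>2 - M\<^sub>1)"
  proof -
    have "2 \<le> card (M\<^sub>2 - M\<^sub>1)" using card_mono[OF _ gone(1)] gone(2) fin by simp
    moreover have "card ?rest = card (M\<^sub>2 - M\<^sub>1) - 2"
      using card_Diff_subset[OF _ gone(1)] gone(2) by simp
    ultimately show ?thesis by simp
  qed
  finally show ?thesis using that a'(1) b'(1) dist by blast
qed

lemma exists_switch_across:
  assumes "finite V" "perfect_matching_complete V M\<^sub>1" "perfect_matching_complete V M\<^sub>2"
    and "P M\<^sub>1" "\<not> P M\<^sub>2"
  shows "\<exists>N a b c d. perfect_matching_complete V N \<and> {a, b} \<in> N \<and> {c, d} \<in> N \<and>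
           distinct [a, b, c, d] \<and> P N \<and> \<not> P (switch N a b c d)"
  using assms(3,5)
proof (induction "card (M\<^sub>2 - M\<^sub>1)" arbitrary: M\<^sub>2 rule: less_induct)
  case less
  have "M\<^sub>1 \<noteq> M\<^sub>2" using assms(4) less.prems(2) by blast
  then obtain a b c d where abcd: "{a, b} \<in> M\<^sub>2" "{c, d} \<in> M\<^sub>2" "distinct [a, b, c, d]"
    and smaller: "card (switch M\<^sub>2 a b c d - M\<^sub>1) < card (M\<^sub>2 - M\<^sub>1)"
    using switch_reduces_difference[OF assms(1,2) less.prems(1)] by blast
  define M\<^sub>3 where "M\<^sub>3 = switch M\<^sub>2 a b c d"
  have M3: "perfect_matching_complete V M\<^sub>3"
    unfolding M\<^sub>3_def by (rule perfect_matching_switch[OF less.prems(1) abcd])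
  show ?case
  proof (cases "P M\<^sub>3")
    case True
    have "{a, c} \<in> M\<^sub>3" "{b, d} \<in> M\<^sub>3" "distinct [a, c, b, d]"
      using abcd(3) by (auto simp: M\<^sub>3_def switch_def)
    moreover have "switch M\<^sub>3 a c b d = M\<^sub>2"
      unfolding M\<^sub>3_def by (rule switch_switch[OF less.prems(1) abcd])
    ultimately show ?thesis using M3 True less.prems(2) by metis
  next
    case False
    then show ?thesis using less.hyps[OF _ M3] smaller by (simp add: M\<^sub>3_def)
  qed
qed

lemma even_sum_signs_iff:
  fixes s :: "'a \<Rightarrow> int"
  assumes "finite A" "\<forall>x\<in>A. s x \<in> {-1, 1}"
  shows "even (sum s A) \<longleftrightarrow> even (card A)"
  using assms by (induction A rule: finite_induct) auto

locale zero_free_signing =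
  fixes V :: "'a set" and \<sigma> :: "'a set \<Rightarrow> int"
  assumes finite_vertices: "finite V"
    and four_dvd_card: "4 dvd card V"
    and sign: "e \<in> complete_edges V \<Longrightarrow> \<sigma> e \<in> {-1, 1}"
    and no_zero_matching: "perfect_matching_complete V M \<Longrightarrow> sum \<sigma> M \<noteq> 0"
begin

lemma sign_doubleton: "u \<in> V \<Longrightarrow> v \<in> V \<Longrightarrow> u \<noteq> v \<Longrightarrow> \<sigma> {u, v} \<in> {-1, 1}"
  by (rule sign[OF doubleton_in_complete_edges])

lemma even_matching_sum:
  assumes "perfect_matching_complete V M"
  shows "even (sum \<sigma> M)"
proof -
  have "even (card M)"
    using four_dvd_card card_perfect_matching[OF finite_vertices assms] by presburger
  moreover have "\<forall>e\<in>M. \<sigma> e \<in> {-1, 1}"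
    using sign assms by (auto simp: perfect_matching_complete_iff)
  ultimately show ?thesis
    using even_sum_signs_iff perfect_matching_finite[OF finite_vertices assms] by blast
qed

lemma switch_sum_nonzero:
  assumes "perfect_matching_complete V K" "{u, v} \<in> K" "{x, y} \<in> K" "distinct [u, v, x, y]"
  shows "sum \<sigma> K - \<sigma> {u, v} - \<sigma> {x, y} + \<sigma> {u, x} + \<sigma> {v, y} \<noteq> 0"
  using no_zero_matching[OF perfect_matching_switch[OF assms]]
  by (simp add: sum_switch[OF finite_vertices assms])

lemma switch_balanced:
  assumes "perfect_matching_complete V K" "{u, v} \<in> K" "{x, y} \<in> K" "distinct [u, v, x, y]"
    and "sum \<sigma> K = \<sigma> {u, v} + \<sigma> {x, y}"
  shows "\<sigma> {u, x} = \<sigma> {v, y}"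
proof -
  have "u \<in> V" "v \<in> V" "x \<in> V" "y \<in> V"
    using assms(1-3) by (auto simp: perfect_matching_complete_iff)
  then have "\<sigma> {u, x} \<in> {-1, 1}" "\<sigma> {v, y} \<in> {-1, 1}"
    using sign_doubleton assms(4) by auto
  moreover have "\<sigma> {u, x} + \<sigma> {v, y} \<noteq> 0"
    using switch_sum_nonzero[OF assms(1-4)] assms(5) by simp
  ultimately show ?thesis by auto
qed

lemma cross_sum_congruent_of_opposite_matchings:
  assumes K: "perfect_matching_complete V K\<^sub>1" "perfect_matching_complete V K\<^sub>2"
    and sums: "sum \<sigma> K\<^sub>1 = -2" "sum \<sigma> K\<^sub>2 = 2"
    and "e \<in> K\<^sub>1" "e \<in> K\<^sub>2" "f \<in> K\<^sub>1" "f \<in> K\<^sub>2" "e \<noteq> f"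
  shows "4 dvd (sum \<sigma> (cross_edges {e, f}) - 2 * sum \<sigma> {e, f})"
proof -
  obtain x y where xy: "e = {x, y}" "x \<noteq> y" "x \<in> V" "y \<in> V"
    using perfect_matching_edgeE[OF K(1) \<open>e \<in> K\<^sub>1\<close>] by metis
  obtain z w where zw: "f = {z, w}" "z \<noteq> w" "z \<in> V" "w \<in> V"
    using perfect_matching_edgeE[OF K(1) \<open>f \<in> K\<^sub>1\<close>] by metis
  have "disjnt e f"
    using K(1) \<open>e \<in> K\<^sub>1\<close> \<open>f \<in> K\<^sub>1\<close> \<open>e \<noteq> f\<close>
    by (auto simp: perfect_matching_complete_iff pairwise_def)
  then have dist: "distinct [x, y, z, w]" "distinct [x, y, w, z]"
    using xy zw by (auto simp: disjnt_def)
  have in_K: "{x, y} \<in> K\<^sub>1" "{x, y} \<in> K\<^sub>2" "{z, w} \<in> K\<^sub>1" "{z, w} \<in> K\<^sub>2"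
    "{w, z} \<in> K\<^sub>1" "{w, z} \<in> K\<^sub>2"
    using assms(5-8) xy zw by (auto simp: insert_commute)
  have "\<sigma> {x, y} \<in> {-1, 1}" "\<sigma> {z, w} \<in> {-1, 1}" "\<sigma> {x, z} \<in> {-1, 1}"
    "\<sigma> {x, w} \<in> {-1, 1}" "\<sigma> {y, z} \<in> {-1, 1}" "\<sigma> {y, w} \<in> {-1, 1}"
    using sign_doubleton xy zw dist(1) by auto
  moreover have "sum \<sigma> K\<^sub>1 - \<sigma> {x, y} - \<sigma> {z, w} + \<sigma> {x, z} + \<sigma> {y, w} \<noteq> 0"
      "sum \<sigma> K\<^sub>2 - \<sigma> {x, y} - \<sigma> {z, w} + \<sigma> {x, z} + \<sigma> {y, w} \<noteq> 0"
      "sum \<sigma> K\<^sub>1 - \<sigma> {x, y} - \<sigma> {w, z} + \<sigma> {x, w} + \<sigma> {y, z} \<noteq> 0"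
      "sum \<sigma> K\<^sub>2 - \<sigma> {x, y} - \<sigma> {w, z} + \<sigma> {x, w} + \<sigma> {y, z} \<noteq> 0"
    using switch_sum_nonzero[OF K(1) in_K(1,3) dist(1)] switch_sum_nonzero[OF K(2) in_K(2,4) dist(1)]
      switch_sum_nonzero[OF K(1) in_K(1,5) dist(2)] switch_sum_nonzero[OF K(2) in_K(2,6) dist(2)]
    by auto
  moreover have "sum \<sigma> (cross_edges {e, f}) = \<sigma> {x, z} + \<sigma> {x, w} + \<sigma> {y, z} + \<sigma> {y, w}"
    using sum_cross_edges_doubleton[OF dist(1)] xy zw by simp
  moreover have "sum \<sigma> {e, f} = \<sigma> {x, y} + \<sigma> {z, w}"
    using \<open>e \<noteq> f\<close> xy zw by simp
  \<comment> \<open>both switch increments avoid \<open>2\<close> and \<open>-2\<close>, so each is \<open>0\<close> or \<open>\<plusminus>4\<close>\<close>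
  ultimately show ?thesis
    using sums by (auto simp: insert_commute[of w z])
qed

end

locale sign_changing_switch = zero_free_signing +
  fixes N :: "'a set set" and a b c d :: 'a
  assumes matching: "perfect_matching_complete V N"
    and edges: "{a, b} \<in> N" "{c, d} \<in> N"
    and distinct: "distinct [a, b, c, d]"
    and negative: "sum \<sigma> N < 0"
    and positive: "0 < sum \<sigma> (switch N a b c d)"
begin

lemma switched_matching: "perfect_matching_complete V (switch N a b c d)"
  by (rule perfect_matching_switch[OF matching edges distinct])

lemma vertices: "a \<in> V" "b \<in> V" "c \<in> V" "d \<in> V"
  using matching edges by (auto simp: perfect_matching_complete_iff)

text \<open>Both matchings have even sums, and a switch changes the sum by at most 4.\<close>
lemma switch_signs:
  "sum \<sigma> N = -2" "\<sigma> {a, b} = -1" "\<sigma> {c, d} = -1" "\<sigma> {a, c} = 1" "\<sigma> {b, d} = 1"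
proof -
  have "sum \<sigma> N \<le> -2"
    using even_matching_sum[OF matching] negative by presburger
  moreover have "2 \<le> sum \<sigma> (switch N a b c d)"
    using even_matching_sum[OF switched_matching] positive by presburger
  moreover have "\<sigma> {a, b} \<in> {-1, 1}" "\<sigma> {c, d} \<in> {-1, 1}" "\<sigma> {a, c} \<in> {-1, 1}" "\<sigma> {b, d} \<in> {-1, 1}"
    using sign_doubleton vertices distinct by auto
  ultimately show "sum \<sigma> N = -2" "\<sigma> {a, b} = -1" "\<sigma> {c, d} = -1" "\<sigma> {a, c} = 1" "\<sigma> {b, d} = 1"
    using sum_switch[OF finite_vertices matching edges distinct, of \<sigma>] by auto
qed

lemma sum_switched: "sum \<sigma> (switch N a b c d) = 2"
  using sum_switch[OF finite_vertices matching edges distinct, of \<sigma>] switch_signs by simp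

definition common_edges :: "'a set set" where
  "common_edges = N - {{a, b}, {c, d}}"

lemma common_edges_fresh: "{a, b} \<notin> insert {c, d} common_edges" "{c, d} \<notin> common_edges"
proof -
  have "{a, b} \<noteq> {c, d}" using distinct by (auto simp: doubleton_eq_iff)
  then show "{a, b} \<notin> insert {c, d} common_edges" "{c, d} \<notin> common_edges"
    by (auto simp: common_edges_def)
qed

lemma matching_eq_common_edges: "N = insert {a, b} (insert {c, d} common_edges)"
  using edges by (auto simp: common_edges_def)

lemma finite_common_edges: "finite common_edges"
  using perfect_matching_finite[OF finite_vertices matching] by (simp add: common_edges_def)

lemma common_edges_subset: "common_edges \<subseteq> N" "common_edges \<subseteq> switch N a b c d"
  by (auto simp: common_edges_def switch_def)

lemma sum_common_edges: "sum \<sigma> common_edges = 0"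
  using switch_signs(1-3) common_edges_fresh finite_common_edges
  by (subst (asm) matching_eq_common_edges) simp

lemma cross_sum_switched_edges: "4 dvd sum \<sigma> (cross_edges {{a, b}, {c, d}})"
proof -
  have "{d, c} \<in> N" "distinct [a, b, d, c]" using edges distinct by (auto simp: insert_commute)
  note other_switch = perfect_matching_switch[OF matching edges(1) this]
    sum_switch[OF finite_vertices matching edges(1) this, of \<sigma>]
  have "\<sigma> {a, d} + \<sigma> {b, c} \<noteq> 0"
    using no_zero_matching[OF other_switch(1)] other_switch(2) switch_signs
    by (simp add: insert_commute[of d c])
  moreover have "\<sigma> {a, d} \<in> {-1, 1}" "\<sigma> {b, c} \<in> {-1, 1}"
    using sign_doubleton vertices distinct by auto
  ultimately show ?thesis
    using sum_cross_edges_doubleton[OF distinct, of \<sigma>] switch_signs by auto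
qed

lemma common_edgeE:
  assumes "f \<in> common_edges"
  obtains x y where "f = {x, y}" "x \<in> V" "y \<in> V" "distinct [a, b, c, d, x, y]"
proof -
  have f: "f \<in> N" "f \<noteq> {a, b}" "f \<noteq> {c, d}" using assms by (auto simp: common_edges_def)
  then obtain x y where xy: "f = {x, y}" "x \<noteq> y" "x \<in> V" "y \<in> V"
    using perfect_matching_edgeE[OF matching] by metis
  have "pairwise disjnt N" using matching by (simp add: perfect_matching_complete_iff)
  then have "disjnt f {a, b}" "disjnt f {c, d}"
    using pairwiseD f edges by metis+
  then have "distinct [a, b, c, d, x, y]" using distinct xy by (auto simp: disjnt_def)
  with xy that show ?thesis by blast
qed

text \<open>Pair \<open>{x, y}\<close> with the two edges of \<open>N\<close> or of the switched matching, whichever have the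
  sign of \<open>{x, y}\<close>: the remaining edges then sum to zero, so every such switch balances.\<close>
lemma common_edge_cross_signs:
  assumes "{x, y} \<in> common_edges" "distinct [a, b, c, d, x, y]"
  shows "\<sigma> {a, y} + \<sigma> {b, y} + \<sigma> {c, y} + \<sigma> {d, y} = \<sigma> {a, x} + \<sigma> {b, x} + \<sigma> {c, x} + \<sigma> {d, x}"
proof -
  let ?M = "switch N a b c d"
  have in_N: "{a, b} \<in> N" "{b, a} \<in> N" "{c, d} \<in> N" "{d, c} \<in> N" "{x, y} \<in> N"
    using edges assms(1) common_edges_subset by (auto simp: insert_commute)
  have in_M: "{a, c} \<in> ?M" "{c, a} \<in> ?M" "{b, d} \<in> ?M" "{d, b} \<in> ?M" "{x, y} \<in> ?M"
    using assms(1) common_edges_subset by (auto simp: switch_def insert_commute)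
  have "x \<in> V" "y \<in> V" using matching in_N(5) by (auto simp: perfect_matching_complete_iff)
  then have "\<sigma> {x, y} \<in> {-1, 1}" using sign_doubleton assms(2) by auto
  then consider "\<sigma> {x, y} = -1" | "\<sigma> {x, y} = 1" by blast
  then show ?thesis
  proof cases
    case 1
    then have "\<sigma> {a, x} = \<sigma> {b, y}" "\<sigma> {b, x} = \<sigma> {a, y}" "\<sigma> {c, x} = \<sigma> {d, y}" "\<sigma> {d, x} = \<sigma> {c, y}"
      using switch_signs assms(2)
      by (auto intro!: switch_balanced[OF matching _ in_N(5)] in_N simp: insert_commute)
    then show ?thesis by simp
  next
    case 2
    then have "\<sigma> {a, x} = \<sigma> {c, y}" "\<sigma> {c, x} = \<sigma> {a, y}" "\<sigma> {b, x} = \<sigma> {d, y}" "\<sigma> {d, x} = \<sigma> {b, y}"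
      using switch_signs sum_switched assms(2)
      by (auto intro!: switch_balanced[OF switched_matching _ in_M(5)] in_M simp: insert_commute)
    then show ?thesis by simp
  qed
qed

lemma cross_sums_with_common_edge:
  assumes "f \<in> common_edges"
  shows "4 dvd (sum \<sigma> (cross_edges {{a, b}, f}) + sum \<sigma> (cross_edges {{c, d}, f}))"
proof -
  obtain x y where xy: "f = {x, y}" "x \<in> V" "y \<in> V" and dist: "distinct [a, b, c, d, x, y]"
    using common_edgeE[OF assms] by metis
  have "sum \<sigma> (cross_edges {{a, b}, f}) = \<sigma> {a, x} + \<sigma> {a, y} + \<sigma> {b, x} + \<sigma> {b, y}"
    "sum \<sigma> (cross_edges {{c, d}, f}) = \<sigma> {c, x} + \<sigma> {c, y} + \<sigma> {d, x} + \<sigma> {d, y}"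
    using dist xy(1) by (simp_all add: sum_cross_edges_doubleton)
  with common_edge_cross_signs[OF assms[unfolded xy(1)] dist]
  have sum_eq: "sum \<sigma> (cross_edges {{a, b}, f}) + sum \<sigma> (cross_edges {{c, d}, f})
      = 2 * (\<sigma> {a, x} + \<sigma> {b, x} + \<sigma> {c, x} + \<sigma> {d, x})"
    by simp
  have "\<sigma> {a, x} \<in> {-1, 1}" "\<sigma> {b, x} \<in> {-1, 1}" "\<sigma> {c, x} \<in> {-1, 1}" "\<sigma> {d, x} \<in> {-1, 1}"
    using sign_doubleton vertices xy dist by auto
  then have "even (\<sigma> {a, x} + \<sigma> {b, x} + \<sigma> {c, x} + \<sigma> {d, x})" by auto
  then obtain k where "\<sigma> {a, x} + \<sigma> {b, x} + \<sigma> {c, x} + \<sigma> {d, x} = 2 * k" ..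
  then show ?thesis unfolding sum_eq by simp
qed

lemma cross_sums_common_edges: "4 dvd (\<Sum>P\<in>complete_edges common_edges. sum \<sigma> (cross_edges P))"
proof -
  have "4 dvd (\<Sum>P\<in>complete_edges common_edges. sum \<sigma> (cross_edges P) - 2 * sum \<sigma> P)"
  proof (intro dvd_sum)
    fix P assume "P \<in> complete_edges common_edges"
    then obtain e f where "P = {e, f}" "e \<noteq> f" "e \<in> common_edges" "f \<in> common_edges"
      by (auto simp: complete_edges_def card_2_iff)
    then show "4 dvd (sum \<sigma> (cross_edges P) - 2 * sum \<sigma> P)"
      using cross_sum_congruent_of_opposite_matchings[OF matching switched_matching
          switch_signs(1) sum_switched] common_edges_subset by blast
  qed
  moreover have "(\<Sum>P\<in>complete_edges common_edges. 2 * sum \<sigma> P) = 0"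
    by (simp only: sum_distrib_left[symmetric] sum_sum_complete_edges[OF finite_common_edges]
        sum_common_edges mult_zero_right)
  ultimately show ?thesis by (simp add: sum_subtractf)
qed

lemma sum_complete_edges_mod_4: "sum \<sigma> (complete_edges V) mod 4 = 2"
proof -
  have "sum \<sigma> (complete_edges V) = sum \<sigma> N + (\<Sum>P\<in>complete_edges N. sum \<sigma> (cross_edges P))"
    by (rule sum_complete_edges_perfect_matching[OF finite_vertices matching])
  also have "(\<Sum>P\<in>complete_edges N. sum \<sigma> (cross_edges P)) =
      (\<Sum>P\<in>complete_edges common_edges. sum \<sigma> (cross_edges P)) + sum \<sigma> (cross_edges {{a, b}, {c, d}}) +
      (\<Sum>f\<in>common_edges. sum \<sigma> (cross_edges {{a, b}, f}) + sum \<sigma> (cross_edges {{c, d}, f}))"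
    by (subst matching_eq_common_edges)
      (rule sum_complete_edges_insert2[OF finite_common_edges common_edges_fresh])
  moreover have "4 dvd (\<Sum>f\<in>common_edges. sum \<sigma> (cross_edges {{a, b}, f}) + sum \<sigma> (cross_edges {{c, d}, f}))"
    by (intro dvd_sum cross_sums_with_common_edge)
  ultimately have "4 dvd (sum \<sigma> (complete_edges V) + 2)"
    using cross_sums_common_edges cross_sum_switched_edges switch_signs(1) by simp
  then show ?thesis by presburger
qed

end

context zero_free_signing
begin

lemma sum_complete_edges_nonzero:
  assumes "perfect_matching_complete V M\<^sub>0"
  shows "sum \<sigma> (complete_edges V) \<noteq> 0"
proof
  assume total: "sum \<sigma> (complete_edges V) = 0"
  obtain M\<^sub>1 where M1: "perfect_matching_complete V M\<^sub>1" "sum \<sigma> M\<^sub>1 \<le> 0"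
    using exists_perfect_matching_sum_nonpos[OF finite_vertices assms, of \<sigma>] total by auto
  have "sum (\<lambda>e. - \<sigma> e) (complete_edges V) \<le> 0"
    using total by (simp add: sum_negf)
  then obtain M\<^sub>2 where M2: "perfect_matching_complete V M\<^sub>2" "sum (\<lambda>e. - \<sigma> e) M\<^sub>2 \<le> 0"
    using exists_perfect_matching_sum_nonpos[OF finite_vertices assms] by blast
  have "sum \<sigma> M\<^sub>1 < 0" "\<not> sum \<sigma> M\<^sub>2 < 0"
    using M1 M2 no_zero_matching[OF M1(1)] by (auto simp: sum_negf)
  then obtain N a b c d where N: "perfect_matching_complete V N" "{a, b} \<in> N" "{c, d} \<in> N"
    "distinct [a, b, c, d]" "sum \<sigma> N < 0" "\<not> sum \<sigma> (switch N a b c d) < 0"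
    using exists_switch_across[OF finite_vertices M1(1) M2(1), of "\<lambda>M. sum \<sigma> M < 0"] by blast
  have "sum \<sigma> (switch N a b c d) \<noteq> 0"
    using no_zero_matching[OF perfect_matching_switch[OF N(1-4)]] .
  with N interpret sign_changing_switch V \<sigma> N a b c d
    by (intro sign_changing_switch.intro zero_free_signing_axioms sign_changing_switch_axioms.intro)
      auto
  show False using sum_complete_edges_mod_4 total by simp
qed

end

theorem theorem1:
  fixes n :: nat and \<sigma> :: "nat set \<Rightarrow> int"
  assumes "n \<ge> 1"
    and "\<forall>e\<in>complete_edges {0..<4*n}. \<sigma> e \<in> {-1, 1}"
    and "(\<Sum>e\<in>complete_edges {0..<4*n}. \<sigma> e) = 0"
  shows "\<exists>M. perfect_matching_complete {0..<4*n} M \<and> (\<Sum>e\<in>M. \<sigma> e) = 0"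
proof (rule ccontr)
  assume "\<not> ?thesis"
  then interpret zero_free_signing "{0..<4*n}" \<sigma>
    using assms(2) by unfold_locales auto
  have "perfect_matching_complete {0..<4*n} ((\<lambda>i. {2 * i, 2 * i + 1}) ` {0..<2*n})"
    using perfect_matching_pairs[of "2 * n"] by (simp add: mult.assoc)
  then show False using sum_complete_edges_nonzero assms(3) by blast
qed

end
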